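(* Let $t$ be an $\mathrm{SL}_2$-tiling with $t_{jp}=1$. (i) If $t_{xy}=1$ for some $(x,y)$ with $x<j,\ y>p$, then either $t_{xp}=1$ for some $x<j$, or $t_{jy}=1$ for some $y>p$, but not both. (ii) If $t_{xy}=1$ for some $(x,y)$ with $x>j,\ y<p$, then either $t_{xp}=1$ for some $x>j$, or $t_{jy}=1$ for some $y<p$, but not both.
   Context: An $\mathrm{SL}_2$-tiling is a map $t:\mathbb{Z}\times\mathbb{Z}\to\{1,2,3,\dots\}$, $(i,j)\mapsto t_{ij}$, with $t_{ij}t_{i+1,j+1}-t_{i,j+1}t_{i+1,j}=1$ for all $i,j$. *)

theory Defs
  imports Main
begin

definition SL2_tiling :: "(int \<Rightarrow> int \<Rightarrow> int) \<Rightarrow> bool" where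
  "SL2_tiling t \<longleftrightarrow>
     (\<forall>i j. t i j \<ge> 1) \<and>
     (\<forall>i j. t i j * t (i+1) (j+1) - t i (j+1) * t (i+1) j = 1)"

end

theory Submission
  imports Defs
begin

text \<open>Every row of an SL2-tiling is an integer combination of any two adjacent rows, with
  2x2 minors as coefficients. Using the rows \<open>j - 1, j\<close> and \<open>t j p = 1\<close> this gives
  \<open>t x y = t x p * t j y - A x * B y\<close> with minors \<open>A x\<close>, \<open>B y\<close> that are negative for
  \<open>x < j\<close> and \<open>y > p\<close>, since \<open>(t x p, A x)\<close> and (reversed) \<open>(t j y, B y)\<close> are sequences of
  consecutive determinant 1 that vanish at \<open>x = j\<close> and \<open>y = p\<close>. So \<open>t x p = t j y = 1\<close>
  would give \<open>t x y \<le> 0\<close>. Conversely, if \<open>t x y = 1\<close> then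
  \<open>1 = (t x p + A x) * (- B y) + t x p * (t j y + B y)\<close> forces \<open>t x p + A x \<le> 0\<close> or
  \<open>t j y + B y \<le> 0\<close>; at the place where such a sum \<open>a + b\<close> turns positive, the determinant
  condition forces \<open>a = 1\<close>. Part (ii) is part (i) for the point reflection of the tiling.\<close>

lemma int_crossing_point:
  fixes k m :: int
  assumes "k \<le> m" and "\<not> P k" and "P m"
  shows "\<exists>i. k \<le> i \<and> i < m \<and> \<not> P i \<and> P (i + 1)"
  using assms(1,3)
proof (induction m rule: int_ge_induct)
  case base
  with assms(2) show ?case by simp
next
  case (step m)
  show ?case
  proof (cases "P m")
    case True
    with step.IH show ?thesis by force
  next
    case False
    with step show ?thesis by auto
  qed
qed

lemma proportional_if_adjacent_proportional:
  fixes f g :: "int \<Rightarrow> 'a :: idom"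
  assumes nonzero: "\<And>k. g k \<noteq> 0"
    and adjacent: "\<And>k. f (k + 1) * g k = f k * g (k + 1)"
  shows "f k * g l = f l * g k"
proof (induction k rule: int_induct[where k = l])
  case base
  show ?case by simp
next
  case (step1 k)
  have "f (k + 1) * g l * g k = f (k + 1) * g k * g l" by (simp add: algebra_simps)
  also have "\<dots> = f l * g (k + 1) * g k"
    using step1.IH adjacent[of k] by (simp add: algebra_simps)
  finally show ?case using nonzero[of k] by simp
next
  case (step2 k)
  have "f (k - 1) * g l * g k = f k * g l * g (k - 1)"
    using adjacent[of "k - 1"] by (simp add: algebra_simps)
  also have "\<dots> = f l * g (k - 1) * g k"
    using step2.IH by (simp add: algebra_simps)
  finally show ?case using nonzero[of k] by simp
qed

locale unimodular_pair =
  fixes a b :: "int \<Rightarrow> int"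
  assumes pos: "\<And>k. 1 \<le> a k"
    and det: "\<And>k. a k * b (k + 1) - b k * a (k + 1) = 1"
begin

lemma neg_before_zero:
  assumes "b m = 0" and "k < m"
  shows "b k < 0"
proof -
  have decrease: "b k < 0" if "b (k + 1) \<le> 0" for k
  proof (rule ccontr)
    assume "\<not> b k < 0"
    then have "0 \<le> b k * a (k + 1)" using pos[of "k + 1"] by simp
    moreover have "a k * b (k + 1) \<le> 0"
      using that pos[of k] by (simp add: mult_nonneg_nonpos)
    ultimately show False using det[of k] by linarith
  qed
  have "b i \<le> 0" if "i \<le> m" for i
    using that
  proof (induction i rule: int_le_induct)
    case base
    show ?case using \<open>b m = 0\<close> by simp
  next
    case (step i)
    then show ?case using decrease[of "i - 1"] by simp
  qed
  with \<open>k < m\<close> show ?thesis using decrease by simp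
qed

lemma one_before_zero:
  assumes "b m = 0" and "k < m" and "a k + b k \<le> 0"
  shows "\<exists>i. k \<le> i \<and> i < m \<and> a i = 1"
proof -
  obtain i where i: "k \<le> i" "i < m" "a i + b i \<le> 0" "1 \<le> a (i + 1) + b (i + 1)"
    using int_crossing_point[of k m "\<lambda>i. 1 \<le> a i + b i"] assms pos[of m]
    by (auto simp: not_le)
  have det_split: "a i * (a (i + 1) + b (i + 1)) + (- (a i + b i)) * a (i + 1) = 1"
    using det[of i] by (simp add: algebra_simps)
  have "1 * 1 \<le> a i * (a (i + 1) + b (i + 1))"
    using pos[of i] i(4) by (intro mult_mono) auto
  moreover have "0 \<le> (- (a i + b i)) * a (i + 1)"
    using pos[of "i + 1"] i(3) by simp
  ultimately have "a i * (a (i + 1) + b (i + 1)) = 1" using det_split by linarith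
  then have "a i = 1" using pos[of i] by (auto simp: zmult_eq_1_iff)
  with i show ?thesis by blast
qed

end

lemma
  assumes "SL2_tiling t"
  shows SL2_tiling_pos: "1 \<le> t i k"
    and SL2_tiling_det: "t i k * t (i + 1) (k + 1) - t i (k + 1) * t (i + 1) k = 1"
  using assms unfolding SL2_tiling_def by blast+

lemma SL2_tiling_reflect:
  assumes "SL2_tiling t"
  shows "SL2_tiling (\<lambda>i k. t (- i) (- k))"
  unfolding SL2_tiling_def
proof (intro conjI allI)
  fix i k
  show "1 \<le> t (- i) (- k)" using assms by (rule SL2_tiling_pos)
  have "t (- (i + 1)) (- (k + 1)) * t (- (i + 1) + 1) (- (k + 1) + 1)
      - t (- (i + 1)) (- (k + 1) + 1) * t (- (i + 1) + 1) (- (k + 1)) = 1"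
    using assms by (rule SL2_tiling_det)
  then show "t (- i) (- k) * t (- (i + 1)) (- (k + 1))
      - t (- i) (- (k + 1)) * t (- (i + 1)) (- k) = 1"
    by (simp add: mult.commute)
qed

lemma SL2_tiling_row_sums_proportional:
  assumes "SL2_tiling t"
  shows "(t (x - 1) y + t (x + 1) y) * t x y' = (t (x - 1) y' + t (x + 1) y') * t x y"
proof (rule proportional_if_adjacent_proportional)
  show "t x k \<noteq> 0" for k
    using SL2_tiling_pos[OF assms, of x k] by simp
  fix k
  have "t (x - 1) k * t x (k + 1) - t (x - 1) (k + 1) * t x k = 1"
    using SL2_tiling_det[OF assms, of "x - 1" k] by simp
  moreover have "t x k * t (x + 1) (k + 1) - t x (k + 1) * t (x + 1) k = 1"
    using SL2_tiling_det[OF assms, of x k] .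
  ultimately show "(t (x - 1) (k + 1) + t (x + 1) (k + 1)) * t x k
      = (t (x - 1) k + t (x + 1) k) * t x (k + 1)"
    by (simp add: algebra_simps)
qed

lemma SL2_tiling_row_combination:
  assumes "SL2_tiling t"
  shows "t x y = (t x q * t (i + 1) (q + 1) - t x (q + 1) * t (i + 1) q) * t i y
              + (t i q * t x (q + 1) - t i (q + 1) * t x q) * t (i + 1) y"
proof -
  txt \<open>Since \<open>t (x - 1) + t (x + 1)\<close> is proportional to row \<open>x\<close>, the identity propagates from
    the rows \<open>i, i + 1\<close> to all rows, in both directions.\<close>
  define c d where "c x = t x q * t (i + 1) (q + 1) - t x (q + 1) * t (i + 1) q"
    and "d x = t i q * t x (q + 1) - t i (q + 1) * t x q" for x
  define Q where "Q x \<longleftrightarrow> (\<forall>y. t x y = c x * t i y + d x * t (i + 1) y)" for x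
  have step: "Q (x - 1) \<longleftrightarrow> Q (x + 1)" if "Q x" for x
  proof -
    let ?s = "\<lambda>y. t (x - 1) y + t (x + 1) y"
    have prop_row: "?s y * t x q = ?s q * t x y" for y
      using SL2_tiling_row_sums_proportional[OF assms] .
    have sum_c: "t x q * (c (x - 1) + c (x + 1)) = ?s q * c x"
      using prop_row[of "q + 1"] unfolding c_def by algebra
    have sum_d: "t x q * (d (x - 1) + d (x + 1)) = ?s q * d x"
      using prop_row[of "q + 1"] unfolding d_def by algebra
    have "?s y = (c (x - 1) + c (x + 1)) * t i y + (d (x - 1) + d (x + 1)) * t (i + 1) y" for y
    proof -
      have "t x q * ((c (x - 1) + c (x + 1)) * t i y + (d (x - 1) + d (x + 1)) * t (i + 1) y)
          = ?s q * (c x * t i y + d x * t (i + 1) y)"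
        using sum_c sum_d by algebra
      also have "\<dots> = t x q * ?s y"
        using that prop_row[of y] unfolding Q_def by (simp add: algebra_simps)
      finally show ?thesis using SL2_tiling_pos[OF assms, of x q] by simp
    qed
    then show ?thesis unfolding Q_def by (auto simp: algebra_simps)
  qed
  have "Q i" "Q (i + 1)"
    using SL2_tiling_det[OF assms, of i q] unfolding Q_def c_def d_def
    by (simp_all add: algebra_simps)
  then have "Q x \<and> Q (x + 1)" for x
    by (induction x rule: int_induct[where k = i]) (use step in \<open>force+\<close>)
  then show ?thesis unfolding Q_def c_def d_def by blast
qed

locale SL2_tiling_one =
  fixes t :: "int \<Rightarrow> int \<Rightarrow> int" and j p :: int
  assumes tiling: "SL2_tiling t" and one: "t j p = 1"
begin

text \<open>Written out using \<open>t j p = 1\<close>, \<open>row_minor x\<close> is the minor of rows \<open>x, j\<close> in columns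
  \<open>p + 1, p\<close> and \<open>col_minor y\<close> the minor of rows \<open>j - 1, j\<close> in columns \<open>y, p\<close>.\<close>

definition row_minor :: "int \<Rightarrow> int" where
  "row_minor x = t x (p + 1) - t x p * t j (p + 1)"

definition col_minor :: "int \<Rightarrow> int" where
  "col_minor y = t (j - 1) y - t (j - 1) p * t j y"

lemma minor_decomposition: "t x y = t x p * t j y - row_minor x * col_minor y"
  using SL2_tiling_row_combination[OF tiling, of x y p "j - 1"]
    SL2_tiling_row_combination[OF tiling, of x p p "j - 1"] one
  unfolding row_minor_def col_minor_def by (simp only: diff_add_cancel) algebra

sublocale col: unimodular_pair "\<lambda>x. t x p" row_minor
proof unfold_locales
  fix x
  show "1 \<le> t x p" using tiling by (rule SL2_tiling_pos)
  show "t x p * row_minor (x + 1) - row_minor x * t (x + 1) p = 1"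
    using SL2_tiling_det[OF tiling, of x p] unfolding row_minor_def by algebra
qed

sublocale row: unimodular_pair "\<lambda>k. t j (- k)" "\<lambda>k. col_minor (- k)"
proof unfold_locales
  fix k
  show "1 \<le> t j (- k)" using tiling by (rule SL2_tiling_pos)
  have "t (j - 1) (- (k + 1)) * t j (- k) - t (j - 1) (- k) * t j (- (k + 1)) = 1"
    using SL2_tiling_det[OF tiling, of "j - 1" "- (k + 1)"] by simp
  then show "t j (- k) * col_minor (- (k + 1)) - col_minor (- k) * t j (- (k + 1)) = 1"
    unfolding col_minor_def by algebra
qed

lemma row_minor_neg: "x < j \<Longrightarrow> row_minor x < 0"
  using col.neg_before_zero[of j x] one by (simp add: row_minor_def)

lemma col_minor_neg: "p < y \<Longrightarrow> col_minor y < 0"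
  using row.neg_before_zero[of "- p" "- y"] one by (simp add: col_minor_def)

lemma not_both_one:
  assumes "x < j" and "p < y"
  shows "\<not> (t x p = 1 \<and> t j y = 1)"
proof
  assume "t x p = 1 \<and> t j y = 1"
  moreover have "0 < row_minor x * col_minor y"
    using row_minor_neg[OF assms(1)] col_minor_neg[OF assms(2)] by (simp add: mult_neg_neg)
  ultimately show False
    using minor_decomposition[of x y] SL2_tiling_pos[OF tiling, of x y] by simp
qed

lemma one_in_column_or_row:
  assumes x: "x < j" and y: "p < y" and xy: "t x y = 1"
  shows "(\<exists>x'. x' < j \<and> t x' p = 1) \<or> (\<exists>y'. y' > p \<and> t j y' = 1)"
proof (cases "t x p + row_minor x \<le> 0")
  case True
  then show ?thesis using col.one_before_zero[of j x] one x by (auto simp: row_minor_def)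
next
  case False
  show ?thesis
  proof (cases "t j y + col_minor y \<le> 0")
    case True
    then obtain k where "k < - p" "t j (- k) = 1"
      using row.one_before_zero[of "- p" "- y"] one y by (auto simp: col_minor_def)
    then show ?thesis by (intro disjI2 exI[of _ "- k"]) auto
  next
    case False
    have "(t x p + row_minor x) * (- col_minor y) + t x p * (t j y + col_minor y) = 1"
      using minor_decomposition[of x y] xy by (simp add: algebra_simps)
    moreover have "0 < (t x p + row_minor x) * (- col_minor y)"
      using \<open>\<not> t x p + row_minor x \<le> 0\<close> col_minor_neg[OF y] by (simp add: mult_pos_neg)
    moreover have "0 < t x p * (t j y + col_minor y)"
      using False SL2_tiling_pos[OF tiling, of x p] by simp
    ultimately show ?thesis by linarith
  qed
qed

lemma ones_northeast:
  "(\<exists>x y. x < j \<and> y > p \<and> t x y = 1) \<longrightarrow>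
     ((\<exists>x. x < j \<and> t x p = 1) \<noteq> (\<exists>y. y > p \<and> t j y = 1))"
  using not_both_one one_in_column_or_row by blast

end

theorem proposition8p1:
  fixes t :: "int \<Rightarrow> int \<Rightarrow> int" and j p :: int
  assumes "SL2_tiling t" and "t j p = 1"
  shows "((\<exists>x y. x < j \<and> y > p \<and> t x y = 1) \<longrightarrow>
           ((\<exists>x. x < j \<and> t x p = 1) \<noteq> (\<exists>y. y > p \<and> t j y = 1)))
       \<and> ((\<exists>x y. x > j \<and> y < p \<and> t x y = 1) \<longrightarrow>
           ((\<exists>x. x > j \<and> t x p = 1) \<noteq> (\<exists>y. y < p \<and> t j y = 1)))"
proof
  show "(\<exists>x y. x < j \<and> y > p \<and> t x y = 1) \<longrightarrow>
          ((\<exists>x. x < j \<and> t x p = 1) \<noteq> (\<exists>y. y > p \<and> t j y = 1))"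
    using assms by (rule SL2_tiling_one.ones_northeast[OF SL2_tiling_one.intro])
next
  have "(\<exists>x y. x < - j \<and> y > - p \<and> t (- x) (- y) = 1) \<longrightarrow>
          ((\<exists>x. x < - j \<and> t (- x) p = 1) \<noteq> (\<exists>y. y > - p \<and> t j (- y) = 1))"
    using SL2_tiling_one.ones_northeast[OF SL2_tiling_one.intro, OF SL2_tiling_reflect, of t "- j" "- p"]
      assms by simp
  moreover have "(\<exists>x y. x < - j \<and> y > - p \<and> t (- x) (- y) = 1)
      \<longleftrightarrow> (\<exists>x y. x > j \<and> y < p \<and> t x y = 1)"
    and "(\<exists>x. x < - j \<and> t (- x) p = 1) \<longleftrightarrow> (\<exists>x. x > j \<and> t x p = 1)"
    and "(\<exists>y. y > - p \<and> t j (- y) = 1) \<longleftrightarrow> (\<exists>y. y < p \<and> t j y = 1)"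
    by (metis minus_less_iff minus_minus)+
  ultimately show "(\<exists>x y. x > j \<and> y < p \<and> t x y = 1) \<longrightarrow>
          ((\<exists>x. x > j \<and> t x p = 1) \<noteq> (\<exists>y. y < p \<and> t j y = 1))"
    by simp
qed

end
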